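(* For all $\Psi\in D(H'_{\mathrm{kin}})$, $$\lim_{R\to\infty}\Big(2\sum_{k\in\overline B(0,R)\cap\mathbb Z^3_*}\sum_{p\in L_k}\lambda_{k,p}b_{k,p}^*b_{k,p}\Psi\Big)=\mathcal N_EH'_{\mathrm{kin}}\Psi.$$
   Context: For $k_F>0$ let $B_F=\overline B(0,k_F)\cap\mathbb Z^3$, $B_F^c=\mathbb Z^3\setminus B_F$, $N=|B_F|$, $\mathbb Z^3_*=\mathbb Z^3\setminus\{0\}$, $\mathcal H_N=\bigwedge^NL^2(\mathbb T^3)$ with $\mathbb T^3=[0,2\pi]^3$, and $c_p,c_p^*$ the fermionic annihilation/creation operators of $u_p(x)=(2\pi)^{-3/2}e^{ip\cdot x}$. On $\mathcal H_N$ let $H'_{\mathrm{kin}}=\sum_{p\in B_F^c}|p|^2c_p^*c_p-\sum_{p\in B_F}|p|^2c_pc_p^*$ with domain $D(H'_{\mathrm{kin}})=\bigwedge^NH^2(\mathbb T^3)$, and $\mathcal N_E=\sum_{p\in B_F^c}c_p^*c_p$. For $k\in\mathbb Z^3_*$: $L_k=\{p\in\mathbb Z^3:|p-k|\le k_F<|p|\}$, $\lambda_{k,p}=\tfrac12(|p|^2-|p-k|^2)$, $b_{k,p}=c_{p-k}^*c_p$. *)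

theory Defs
  imports "HOL-Analysis.Analysis"
begin

(* A state is a coefficient function on subsets S of Z^3: psi S is the coefficient of the
   Slater determinant u_{p_1} /\ ... /\ u_{p_N}, where S = {p_1 < ... < p_N} in the
   lexicographic order on Z^3 (zless below). *)
type_synonym Z3 = "int \<times> int \<times> int"
type_synonym state = "Z3 set \<Rightarrow> complex"

definition zsub :: "Z3 \<Rightarrow> Z3 \<Rightarrow> Z3" where
  "zsub p k = (case p of (a,b,c) \<Rightarrow> case k of (a',b',c') \<Rightarrow> (a - a', b - b', c - c'))"

definition sqn :: "Z3 \<Rightarrow> real" where
  "sqn p = (case p of (a,b,c) \<Rightarrow> real_of_int (a^2 + b^2 + c^2))"

definition znorm :: "Z3 \<Rightarrow> real" where
  "znorm p = sqrt (sqn p)"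

definition fermi_ball :: "real \<Rightarrow> Z3 set" where
  "fermi_ball kF = {p. znorm p \<le> kF}"

definition zless :: "Z3 \<Rightarrow> Z3 \<Rightarrow> bool" where
  "zless q p = (case q of (a,b,c) \<Rightarrow> case p of (a',b',c') \<Rightarrow>
     a < a' \<or> (a = a' \<and> (b < b' \<or> (b = b' \<and> c < c'))))"

(* fermionic sign of moving u_p past the modes of S below p *)
definition fsign :: "Z3 \<Rightarrow> Z3 set \<Rightarrow> complex" where
  "fsign p S = (-1) ^ card {q \<in> S. zless q p}"

definition ann :: "Z3 \<Rightarrow> state \<Rightarrow> state" where
  "ann p \<psi> S = (if p \<in> S then 0 else fsign p S * \<psi> (insert p S))"

definition cre :: "Z3 \<Rightarrow> state \<Rightarrow> state" where
  "cre p \<psi> S = (if p \<in> S then fsign p (S - {p}) * \<psi> (S - {p}) else 0)"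

definition in_HN :: "nat \<Rightarrow> state \<Rightarrow> bool" where
  "in_HN N \<psi> \<longleftrightarrow> (\<forall>S. \<psi> S \<noteq> 0 \<longrightarrow> finite S \<and> card S = N)
      \<and> (\<lambda>S. (cmod (\<psi> S))^2) summable_on UNIV"

(* D(H'_kin) = /\^N H^2(T^3) *)
definition dom_Hkin :: "real \<Rightarrow> state set" where
  "dom_Hkin kF = {\<psi>. in_HN (card (fermi_ball kF)) \<psi>
      \<and> (\<lambda>S. (\<Sum>p\<in>S. sqn p)^2 * (cmod (\<psi> S))^2) summable_on UNIV}"

definition Hkin :: "real \<Rightarrow> state \<Rightarrow> state" where
  "Hkin kF \<psi> S =
     (\<Sum>\<^sub>\<infinity>p\<in>- fermi_ball kF. complex_of_real (sqn p) * cre p (ann p \<psi>) S)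
   - (\<Sum>\<^sub>\<infinity>p\<in>fermi_ball kF. complex_of_real (sqn p) * ann p (cre p \<psi>) S)"

definition NE :: "real \<Rightarrow> state \<Rightarrow> state" where
  "NE kF \<psi> S = (\<Sum>\<^sub>\<infinity>p\<in>- fermi_ball kF. cre p (ann p \<psi>) S)"

definition Lk :: "real \<Rightarrow> Z3 \<Rightarrow> Z3 set" where
  "Lk kF k = {p. znorm (zsub p k) \<le> kF \<and> kF < znorm p}"

definition lam :: "Z3 \<Rightarrow> Z3 \<Rightarrow> real" where
  "lam k p = (sqn p - sqn (zsub p k)) / 2"

definition bop :: "Z3 \<Rightarrow> Z3 \<Rightarrow> state \<Rightarrow> state" where
  "bop k p \<psi> = cre (zsub p k) (ann p \<psi>)"
definition bop_adj :: "Z3 \<Rightarrow> Z3 \<Rightarrow> state \<Rightarrow> state" where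
  "bop_adj k p \<psi> = cre p (ann (zsub p k) \<psi>)"

definition trunc_sum :: "real \<Rightarrow> real \<Rightarrow> state \<Rightarrow> state" where
  "trunc_sum kF R \<psi> S = 2 * (\<Sum>k\<in>{k. k \<noteq> (0,0,0) \<and> znorm k \<le> R}.
        \<Sum>p\<in>Lk kF k. complex_of_real (lam k p) * bop_adj k p (bop k p \<psi>) S)"

(* convergence in the Hilbert space norm (l^2 over the Slater basis) as R \<rightarrow> \<infinity> *)
definition l2_tendsto_at_top :: "(real \<Rightarrow> state) \<Rightarrow> state \<Rightarrow> bool" where
  "l2_tendsto_at_top F G \<longleftrightarrow>
     (\<forall>\<^sub>F R in at_top. (\<lambda>S. (cmod (F R S - G S))^2) summable_on UNIV)
     \<and> ((\<lambda>R. \<Sum>\<^sub>\<infinity>S. (cmod (F R S - G S))^2) \<longlongrightarrow> 0) at_top"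

end

theory Submission
  imports Defs
begin

(* In the Slater basis all operators involved are diagonal.  The operator b_{k,p}^* b_{k,p}
   multiplies the coefficient of a configuration S by 1 if p is occupied and the hole p - k is
   empty, and by 0 otherwise; since L_k forces p outside and p - k inside the Fermi ball, the
   truncated sum multiplies the coefficient of S by the sum of |p|^2 - |q|^2 over the
   particle-hole pairs p in S - B_F, q in B_F - S with |p - q| <= R.  These terms are
   nonnegative and, for R beyond all the finitely many distances |p - q|, the sum is complete
   and factorises as |S - B_F| * E(S): for configurations of N = |B_F| particles there are as
   many particles as holes.  Here |S - B_F| and E(S) are the eigenvalues of N_E and H'_kin.
   Dominated convergence with the majorant N * sum_{p in S} |p|^2, square-summable against the
   coefficients exactly by the domain condition, gives convergence in norm. *)

lemma infsum_tendsto_zero_dominated: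
  fixes f :: "'b \<Rightarrow> 'a \<Rightarrow> real" and g :: "'a \<Rightarrow> real"
  assumes g: "g summable_on UNIV"
    and nonneg: "\<And>R x. 0 \<le> f R x" and le: "\<And>R x. f R x \<le> g x"
    and eventually_zero: "\<And>x. eventually (\<lambda>R. f R x = 0) F"
  shows "((\<lambda>R. infsum (f R) UNIV) \<longlongrightarrow> 0) F"
proof (rule tendstoI)
  fix e :: real assume e: "e > 0"
  have f_summable: "f R summable_on A" for R A
    by (rule summable_on_subset_banach[OF summable_on_comparison_test[OF g]]) (use le nonneg in auto)
  have "eventually (\<lambda>X. dist (sum g X) (infsum g UNIV) < e) (finite_subsets_at_top UNIV)"
    using infsum_tendsto[OF g] e tendstoD by blast
  then obtain X where X: "finite X" and close: "dist (sum g X) (infsum g UNIV) < e"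
    unfolding eventually_finite_subsets_at_top by blast
  have g_tail: "g summable_on (-X)" using g summable_on_subset_banach by blast
  have "infsum g UNIV = infsum g (-X) + infsum g X"
    using infsum_Un_disjoint[OF g_tail, of X] X by (simp add: Un_commute)
  hence tail_small: "infsum g (-X) < e" using close X by (simp add: dist_real_def)
  have "eventually (\<lambda>R. \<forall>x\<in>X. f R x = 0) F"
    by (rule eventually_ball_finite[OF X]) (use eventually_zero in auto)
  thus "eventually (\<lambda>R. dist (infsum (f R) UNIV) 0 < e) F"
  proof eventually_elim
    case (elim R)
    have "infsum (f R) UNIV = infsum (f R) (-X) + infsum (f R) X"
      using infsum_Un_disjoint[OF f_summable f_summable, of "-X" X] X by (simp add: Un_commute)
    also have "infsum (f R) X = 0" using elim X by simp
    finally have "infsum (f R) UNIV = infsum (f R) (-X)" by simp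
    moreover have "infsum (f R) (-X) \<le> infsum g (-X)"
      by (rule infsum_mono[OF f_summable g_tail]) (use le in auto)
    moreover have "0 \<le> infsum (f R) UNIV" by (rule infsum_nonneg) (use nonneg in auto)
    ultimately show ?case using tail_small by (simp add: dist_real_def)
  qed
qed

lemma l2_tendsto_at_top_multiplier:
  fixes F :: "real \<Rightarrow> state" and G \<psi> :: state and m :: "real \<Rightarrow> Z3 set \<Rightarrow> real"
  assumes diff: "\<And>R S. F R S - G S = complex_of_real (m R S) * \<psi> S"
    and bound: "\<And>R S. \<psi> S \<noteq> 0 \<Longrightarrow> \<bar>m R S\<bar> \<le> w S"
    and summable: "(\<lambda>S. (w S)^2 * (cmod (\<psi> S))^2) summable_on UNIV"
    and eventually_zero: "\<And>S. \<psi> S \<noteq> 0 \<Longrightarrow> eventually (\<lambda>R. m R S = 0) at_top"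
  shows "l2_tendsto_at_top F G"
proof -
  have norm_diff: "(cmod (F R S - G S))^2 = (m R S)^2 * (cmod (\<psi> S))^2" for R S
    by (simp add: diff norm_mult power_mult_distrib)
  have le: "(cmod (F R S - G S))^2 \<le> (w S)^2 * (cmod (\<psi> S))^2" for R S
  proof (cases "\<psi> S = 0")
    case False
    hence "\<bar>m R S\<bar>^2 \<le> (w S)^2" using bound by (intro power_mono) auto
    thus ?thesis unfolding norm_diff by (simp add: mult_right_mono)
  qed (simp add: norm_diff)
  have "eventually (\<lambda>R. (cmod (F R S - G S))^2 = 0) at_top" for S
    using eventually_zero[of S] by (cases "\<psi> S = 0") (auto simp: norm_diff elim: eventually_mono)
  hence "((\<lambda>R. \<Sum>\<^sub>\<infinity>S. (cmod (F R S - G S))^2) \<longlongrightarrow> 0) at_top"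
    using le by (intro infsum_tendsto_zero_dominated[OF summable]) auto
  moreover have "(\<lambda>S. (cmod (F R S - G S))^2) summable_on UNIV" for R
    using le by (intro summable_on_comparison_test[OF summable]) auto
  ultimately show ?thesis unfolding l2_tendsto_at_top_def by simp
qed

lemma fsign_square: "fsign p S * fsign p S = 1"
  unfolding fsign_def by (simp add: power_mult_distrib[symmetric])

lemma cre_ann: "cre p (ann p \<phi>) S = (if p \<in> S then \<phi> S else 0)"
  unfolding cre_def ann_def by (auto simp: insert_absorb fsign_square mult.assoc[symmetric])

lemma ann_cre: "ann p (cre p \<phi>) S = (if p \<in> S then 0 else \<phi> S)"
  unfolding cre_def ann_def by (auto simp: fsign_square mult.assoc[symmetric])

lemma bop_adj_bop:
  assumes "zsub p k \<noteq> p"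
  shows "bop_adj k p (bop k p \<phi>) S = (if p \<in> S \<and> zsub p k \<notin> S then \<phi> S else 0)"
proof (cases "p \<in> S")
  case True
  let ?q = "zsub p k"
  have "bop_adj k p (bop k p \<phi>) S = fsign p (S - {p}) * ann ?q (cre ?q (ann p \<phi>)) (S - {p})"
    using True by (simp add: bop_adj_def bop_def cre_def)
  also have "ann ?q (cre ?q (ann p \<phi>)) (S - {p}) = (if ?q \<in> S then 0 else ann p \<phi> (S - {p}))"
    using assms by (simp add: ann_cre)
  also have "ann p \<phi> (S - {p}) = fsign p (S - {p}) * \<phi> S"
    using True by (simp add: ann_def insert_absorb)
  finally show ?thesis using True by (auto simp: fsign_square mult.assoc[symmetric])
qed (simp add: bop_adj_def cre_def)

lemma zsub_zsub: "zsub p (zsub p q) = q"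
  unfolding zsub_def by (cases p; cases q) auto

lemma zsub_eq_zero_iff: "zsub p q = (0,0,0) \<longleftrightarrow> p = q"
  unfolding zsub_def by (cases p; cases q) auto

lemma zsub_eq_self_iff: "zsub p k = p \<longleftrightarrow> k = (0,0,0)"
  unfolding zsub_def by (cases p; cases k) auto

lemma zsub_zsub_neg: "zsub (zsub p k) (zsub (0,0,0) k) = p"
  unfolding zsub_def by (cases p; cases k) auto

lemma sqn_nonneg: "0 \<le> sqn p"
  unfolding sqn_def by (cases p) auto

lemma finite_znorm_le: "finite {p :: Z3. znorm p \<le> R}"
proof -
  define m where "m = ceiling R"
  have "{p :: Z3. znorm p \<le> R} \<subseteq> {-m..m} \<times> {-m..m} \<times> {-m..m}"
  proof
    fix p :: Z3 assume "p \<in> {p. znorm p \<le> R}"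
    then obtain a b c where p: "p = (a,b,c)" and norm_le: "sqrt (real_of_int (a^2+b^2+c^2)) \<le> R"
      by (cases p) (auto simp: znorm_def sqn_def)
    have coord_le: "\<bar>x\<bar> \<le> R" if "x^2 \<le> a^2+b^2+c^2" for x :: int
    proof -
      have "sqrt (real_of_int (x^2)) \<le> sqrt (real_of_int (a^2+b^2+c^2))"
        using that by (subst real_sqrt_le_iff) linarith
      thus ?thesis using norm_le by simp
    qed
    have "\<bar>a\<bar> \<le> R" "\<bar>b\<bar> \<le> R" "\<bar>c\<bar> \<le> R" by (rule coord_le; simp)+
    hence "\<bar>a\<bar> \<le> m" "\<bar>b\<bar> \<le> m" "\<bar>c\<bar> \<le> m" unfolding m_def by linarith+
    thus "p \<in> {-m..m} \<times> {-m..m} \<times> {-m..m}" using p by auto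
  qed
  thus ?thesis by (rule finite_subset) auto
qed

lemma finite_fermi_ball: "finite (fermi_ball kF)"
  unfolding fermi_ball_def by (rule finite_znorm_le)

lemma finite_Lk: "finite (Lk kF k)"
proof -
  have "Lk kF k \<subseteq> (\<lambda>q. zsub q (zsub (0,0,0) k)) ` fermi_ball kF"
  proof
    fix p assume "p \<in> Lk kF k"
    hence "zsub p k \<in> fermi_ball kF" by (simp add: Lk_def fermi_ball_def)
    thus "p \<in> (\<lambda>q. zsub q (zsub (0,0,0) k)) ` fermi_ball kF"
      using zsub_zsub_neg[of p k] by (metis image_eqI)
  qed
  thus ?thesis by (rule finite_subset) (rule finite_imageI[OF finite_fermi_ball])
qed

lemma sqn_less_outside_fermi_ball:
  assumes "p \<notin> fermi_ball kF" "q \<in> fermi_ball kF"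
  shows "sqn q < sqn p"
proof -
  have "sqrt (sqn q) \<le> kF" "\<not> sqrt (sqn p) \<le> kF"
    using assms unfolding fermi_ball_def znorm_def by auto
  hence "sqrt (sqn q) < sqrt (sqn p)" by linarith
  thus ?thesis by simp
qed

lemma infsum_weighted_number_operator:
  assumes "\<phi> S \<noteq> 0 \<Longrightarrow> finite S"
  shows "(\<Sum>\<^sub>\<infinity>p\<in>A. complex_of_real (w p) * cre p (ann p \<phi>) S)
       = complex_of_real (\<Sum>p\<in>A \<inter> S. w p) * \<phi> S"
proof (cases "\<phi> S = 0")
  case False
  hence "finite S" using assms by blast
  have "(\<Sum>\<^sub>\<infinity>p\<in>A. complex_of_real (w p) * cre p (ann p \<phi>) S)
      = (\<Sum>\<^sub>\<infinity>p\<in>A \<inter> S. complex_of_real (w p) * \<phi> S)"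
    by (rule infsum_cong_neutral) (auto simp: cre_ann)
  also have "\<dots> = complex_of_real (\<Sum>p\<in>A \<inter> S. w p) * \<phi> S"
    using \<open>finite S\<close> by (simp add: sum_distrib_right)
  finally show ?thesis .
qed (simp add: cre_ann infsum_0)

definition kinetic_eigenvalue :: "real \<Rightarrow> Z3 set \<Rightarrow> real" where
  "kinetic_eigenvalue kF S = (\<Sum>p\<in>S - fermi_ball kF. sqn p) - (\<Sum>p\<in>fermi_ball kF - S. sqn p)"

lemma Hkin_diagonal:
  assumes "\<psi> S \<noteq> 0 \<Longrightarrow> finite S"
  shows "Hkin kF \<psi> S = complex_of_real (kinetic_eigenvalue kF S) * \<psi> S"
proof -
  let ?B = "fermi_ball kF"
  have particles: "(\<Sum>\<^sub>\<infinity>p\<in>- ?B. complex_of_real (sqn p) * cre p (ann p \<psi>) S)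
     = complex_of_real (\<Sum>p\<in>S - ?B. sqn p) * \<psi> S"
    using infsum_weighted_number_operator[OF assms, where A="- ?B" and w=sqn] by (simp add: Int_commute Diff_eq)
  have "(\<Sum>\<^sub>\<infinity>p\<in>?B. complex_of_real (sqn p) * ann p (cre p \<psi>) S)
     = (\<Sum>p\<in>?B. complex_of_real (if p \<in> S then 0 else sqn p) * \<psi> S)"
    using finite_fermi_ball by (auto simp: ann_cre intro!: sum.cong)
  also have "\<dots> = complex_of_real (\<Sum>p\<in>?B. if p \<in> S then 0 else sqn p) * \<psi> S"
    by (simp add: sum_distrib_right)
  also have "(\<Sum>p\<in>?B. if p \<in> S then 0 else sqn p) = (\<Sum>p\<in>?B - S. sqn p)"
    using finite_fermi_ball by (simp add: sum.If_cases Diff_eq)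
  finally have holes: "(\<Sum>\<^sub>\<infinity>p\<in>?B. complex_of_real (sqn p) * ann p (cre p \<psi>) S)
     = complex_of_real (\<Sum>p\<in>?B - S. sqn p) * \<psi> S" .
  show ?thesis unfolding Hkin_def particles holes kinetic_eigenvalue_def by (simp add: algebra_simps)
qed

lemma NE_Hkin_diagonal:
  assumes "\<psi> S \<noteq> 0 \<Longrightarrow> finite S"
  shows "NE kF (Hkin kF \<psi>) S
       = complex_of_real (real (card (S - fermi_ball kF)) * kinetic_eigenvalue kF S) * \<psi> S"
proof -
  have "Hkin kF \<psi> S \<noteq> 0 \<Longrightarrow> finite S" using assms Hkin_diagonal[OF assms] by auto
  from infsum_weighted_number_operator[OF this, where A="- fermi_ball kF" and w="\<lambda>_. 1"]
  have "NE kF (Hkin kF \<psi>) S = of_nat (card (S - fermi_ball kF)) * Hkin kF \<psi> S"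
    unfolding NE_def by (simp add: Int_commute Diff_eq)
  thus ?thesis by (simp add: Hkin_diagonal[OF assms])
qed

definition trunc_eigenvalue :: "real \<Rightarrow> real \<Rightarrow> Z3 set \<Rightarrow> real" where
  "trunc_eigenvalue kF R S = (\<Sum>k\<in>{k. k \<noteq> (0,0,0) \<and> znorm k \<le> R}. \<Sum>p\<in>Lk kF k.
      if p \<in> S \<and> zsub p k \<notin> S then sqn p - sqn (zsub p k) else 0)"

lemma trunc_sum_diagonal:
  "trunc_sum kF R \<psi> S = complex_of_real (trunc_eigenvalue kF R S) * \<psi> S"
proof -
  let ?K = "{k. k \<noteq> (0,0,0) \<and> znorm k \<le> R}"
  have "complex_of_real (lam k p) * bop_adj k p (bop k p \<psi>) S
      = complex_of_real (if p \<in> S \<and> zsub p k \<notin> S then lam k p else 0) * \<psi> S" if "k \<in> ?K" for k p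
    using that by (simp add: bop_adj_bop zsub_eq_self_iff)
  hence "trunc_sum kF R \<psi> S = 2 * (\<Sum>k\<in>?K. \<Sum>p\<in>Lk kF k.
      complex_of_real (if p \<in> S \<and> zsub p k \<notin> S then lam k p else 0) * \<psi> S)"
    unfolding trunc_sum_def by (intro arg_cong[where f="\<lambda>x. 2 * x"] sum.cong) auto
  also have "\<dots> = complex_of_real (trunc_eigenvalue kF R S) * \<psi> S"
    unfolding trunc_eigenvalue_def of_real_sum sum_distrib_right sum_distrib_left
    by (intro sum.cong refl) (auto simp: lam_def)
  finally show ?thesis .
qed

lemma trunc_eigenvalue_eq:
  assumes "finite S"
  shows "trunc_eigenvalue kF R S
       = (\<Sum>p\<in>S - fermi_ball kF. \<Sum>q\<in>{q\<in>fermi_ball kF - S. znorm (zsub p q) \<le> R}. sqn p - sqn q)"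
proof -
  let ?A = "S - fermi_ball kF" and ?C = "fermi_ball kF - S"
  let ?K = "{k. k \<noteq> (0,0,0) \<and> znorm k \<le> R}"
  have finite_K: "finite ?K" using finite_znorm_le[of R] by (rule finite_subset[rotated]) auto
  let ?term = "\<lambda>p k. if zsub p k \<in> ?C then sqn p - sqn (zsub p k) else 0"
  have sum_Lk: "(\<Sum>p\<in>Lk kF k. if p \<in> S \<and> zsub p k \<notin> S then sqn p - sqn (zsub p k) else 0)
     = (\<Sum>p\<in>?A. ?term p k)" for k
  proof -
    have "{p\<in>Lk kF k. p \<in> S \<and> zsub p k \<notin> S} = {p\<in>?A. zsub p k \<in> ?C}"
      by (auto simp: Lk_def fermi_ball_def)
    thus ?thesis using finite_Lk assms
      by (simp add: sum.inter_filter[symmetric] del: sum.inter_filter)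
  qed
  have sum_K: "(\<Sum>k\<in>?K. ?term p k) = (\<Sum>q\<in>{q\<in>?C. znorm (zsub p q) \<le> R}. sqn p - sqn q)"
    if "p \<in> ?A" for p
  proof -
    have "(\<Sum>k\<in>?K. ?term p k) = (\<Sum>k\<in>{k\<in>?K. zsub p k \<in> ?C}. sqn p - sqn (zsub p k))"
      by (rule sum.inter_filter[OF finite_K, symmetric])
    also have "\<dots> = (\<Sum>q\<in>{q\<in>?C. znorm (zsub p q) \<le> R}. sqn p - sqn q)"
    proof (rule sum.reindex_bij_witness[where i="zsub p" and j="zsub p"])
      fix q assume q: "q \<in> {q\<in>?C. znorm (zsub p q) \<le> R}"
      hence "p \<noteq> q" using that by auto
      thus "zsub p q \<in> {k\<in>?K. zsub p k \<in> ?C}" using q by (auto simp: zsub_zsub zsub_eq_zero_iff)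
    qed (auto simp: zsub_zsub)
    finally show ?thesis .
  qed
  have "trunc_eigenvalue kF R S = (\<Sum>k\<in>?K. \<Sum>p\<in>?A. ?term p k)"
    unfolding trunc_eigenvalue_def sum_Lk ..
  also have "\<dots> = (\<Sum>p\<in>?A. \<Sum>k\<in>?K. ?term p k)"
    by (rule sum.swap)
  also have "\<dots> = (\<Sum>p\<in>?A. \<Sum>q\<in>{q\<in>?C. znorm (zsub p q) \<le> R}. sqn p - sqn q)"
    by (rule sum.cong[OF refl]) (rule sum_K)
  finally show ?thesis .
qed

definition particle_hole_energy :: "real \<Rightarrow> Z3 set \<Rightarrow> real" where
  "particle_hole_energy kF S = (\<Sum>p\<in>S - fermi_ball kF. \<Sum>q\<in>fermi_ball kF - S. sqn p - sqn q)"

lemma trunc_eigenvalue_bounds: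
  assumes "finite S"
  shows "0 \<le> trunc_eigenvalue kF R S" "trunc_eigenvalue kF R S \<le> particle_hole_energy kF S"
proof -
  have nonneg: "0 \<le> sqn p - sqn q" if "p \<in> S - fermi_ball kF" "q \<in> fermi_ball kF - S" for p q
    using sqn_less_outside_fermi_ball[of p kF q] that by auto
  show "0 \<le> trunc_eigenvalue kF R S" unfolding trunc_eigenvalue_eq[OF assms]
    by (intro sum_nonneg) (use nonneg in auto)
  show "trunc_eigenvalue kF R S \<le> particle_hole_energy kF S"
    unfolding trunc_eigenvalue_eq[OF assms] particle_hole_energy_def
    by (intro sum_mono sum_mono2 finite_Diff finite_fermi_ball) (use nonneg in auto)
qed

lemma eventually_trunc_eigenvalue_eq:
  assumes "finite S"
  shows "eventually (\<lambda>R. trunc_eigenvalue kF R S = particle_hole_energy kF S) at_top"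
proof -
  let ?A = "S - fermi_ball kF" and ?C = "fermi_ball kF - S"
  have "eventually (\<lambda>R. \<forall>p\<in>?A. \<forall>q\<in>?C. znorm (zsub p q) \<le> R) at_top"
    using assms finite_fermi_ball
    by (intro eventually_ball_finite ballI eventually_ge_at_top) auto
  thus ?thesis
  proof eventually_elim
    case (elim R)
    hence "\<And>p. p \<in> ?A \<Longrightarrow> {q\<in>?C. znorm (zsub p q) \<le> R} = ?C" by auto
    thus ?case unfolding trunc_eigenvalue_eq[OF assms] particle_hole_energy_def
      by (intro sum.cong refl) auto
  qed
qed

lemma particle_hole_energy_eq:
  assumes "finite S" and "card S = card (fermi_ball kF)"
  shows "particle_hole_energy kF S = real (card (S - fermi_ball kF)) * kinetic_eigenvalue kF S"
proof -
  let ?B = "fermi_ball kF"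
  have "card (S - ?B) = card (?B - S)"
    using assms finite_fermi_ball by (simp add: card_Diff_subset_Int Int_commute)
  moreover have "particle_hole_energy kF S
      = real (card (?B - S)) * (\<Sum>p\<in>S - ?B. sqn p) - real (card (S - ?B)) * (\<Sum>q\<in>?B - S. sqn q)"
    unfolding particle_hole_energy_def by (simp add: sum_subtractf sum_distrib_left)
  ultimately show ?thesis unfolding kinetic_eigenvalue_def by (simp add: algebra_simps)
qed

lemma particle_hole_energy_le:
  assumes "finite S"
  shows "particle_hole_energy kF S \<le> real (card (fermi_ball kF)) * (\<Sum>p\<in>S. sqn p)"
proof -
  let ?B = "fermi_ball kF"
  have "particle_hole_energy kF S \<le> (\<Sum>p\<in>S - ?B. \<Sum>q\<in>?B - S. sqn p)"
    unfolding particle_hole_energy_def by (intro sum_mono) (simp add: sqn_nonneg)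
  also have "\<dots> = real (card (?B - S)) * (\<Sum>p\<in>S - ?B. sqn p)"
    by (simp add: sum_distrib_left)
  also have "\<dots> \<le> real (card ?B) * (\<Sum>p\<in>S. sqn p)"
  proof (rule mult_mono)
    show "real (card (?B - S)) \<le> real (card ?B)" using finite_fermi_ball by (simp add: card_mono)
    show "(\<Sum>p\<in>S - ?B. sqn p) \<le> (\<Sum>p\<in>S. sqn p)"
      using assms sqn_nonneg by (intro sum_mono2) auto
  qed (auto simp: sum_nonneg sqn_nonneg)
  finally show ?thesis .
qed

theorem mainTheorem15:
  fixes kF :: real and \<psi> :: state
  assumes "kF > 0" and "\<psi> \<in> dom_Hkin kF"
  shows "l2_tendsto_at_top (\<lambda>R. trunc_sum kF R \<psi>) (NE kF (Hkin kF \<psi>))"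
proof -
  let ?N = "card (fermi_ball kF)"
  have configurations: "finite S \<and> card S = ?N" if "\<psi> S \<noteq> 0" for S
    using assms(2) that by (auto simp: dom_Hkin_def in_HN_def)
  have "(\<lambda>S. (real ?N)^2 * ((\<Sum>p\<in>S. sqn p)^2 * (cmod (\<psi> S))^2)) summable_on UNIV"
    using assms(2) by (intro summable_on_cmult_right) (simp add: dom_Hkin_def)
  hence summable: "(\<lambda>S. (real ?N * (\<Sum>p\<in>S. sqn p))^2 * (cmod (\<psi> S))^2) summable_on UNIV"
    by (simp add: power_mult_distrib mult.assoc)
  have NE_Hkin: "NE kF (Hkin kF \<psi>) S = complex_of_real (particle_hole_energy kF S) * \<psi> S" for S
    using NE_Hkin_diagonal[of \<psi> S kF] configurations[of S] particle_hole_energy_eq[of S kF]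
    by (cases "\<psi> S = 0") auto
  show ?thesis
  proof (rule l2_tendsto_at_top_multiplier[OF _ _ summable])
    show "trunc_sum kF R \<psi> S - NE kF (Hkin kF \<psi>) S
        = complex_of_real (trunc_eigenvalue kF R S - particle_hole_energy kF S) * \<psi> S" for R S
      by (simp add: trunc_sum_diagonal NE_Hkin algebra_simps)
    show "\<bar>trunc_eigenvalue kF R S - particle_hole_energy kF S\<bar> \<le> real ?N * (\<Sum>p\<in>S. sqn p)"
      if "\<psi> S \<noteq> 0" for R S
    proof -
      have "finite S" using configurations[OF that] by simp
      thus ?thesis using trunc_eigenvalue_bounds[of S kF R] particle_hole_energy_le[of S kF]
        unfolding abs_le_iff by linarith
    qed
    show "eventually (\<lambda>R. trunc_eigenvalue kF R S - particle_hole_energy kF S = 0) at_top"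
      if "\<psi> S \<noteq> 0" for S
      using eventually_trunc_eigenvalue_eq[of S kF] configurations[OF that] by simp
  qed
qed

end
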